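(* Let $p(t)=1+\sum_{j=1}^K c_jt^j$ be a real polynomial with each $c_j\ge 0$, and suppose at least $k$ of the $c_j$ are positive. Let $m\ge 0$ be an integer and $F(t)=(1+t)^m$. Then $N(Fp)\ge m+1+k$.
   Context: $N(q)$ denotes the number of distinct monomials with nonzero coefficient in the polynomial $q$. *)

theory Defs
  imports "HOL-Computational_Algebra.Polynomial"
begin

definition num_monomials :: "'a::zero poly \<Rightarrow> nat" where
  "num_monomials q = card {i. coeff q i \<noteq> 0}"

end

theory Submission
  imports Defs
begin

text \<open>With nonnegative coefficients, multiplying by \<open>1 + t\<close> cannot cancel any monomial, and it
  creates the new top monomial \<open>t\<^bsup>deg q + 1\<^esup>\<close>; so each of the \<open>m\<close> factors of \<open>F\<close> raises \<open>N\<close>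
  by at least one. Finally \<open>N(p) \<ge> k + 1\<close>, counting the constant term and the \<open>k\<close> positive
  coefficients.\<close>

lemma finite_coeff_support: "finite {i. coeff q i \<noteq> 0}"
  by (rule finite_subset[of _ "{..degree q}"]) (auto intro: le_degree)

lemma coeff_one_plus_X_mult_nonneg:
  fixes q :: "'a::linordered_semidom poly"
  assumes "\<forall>j. coeff q j \<ge> 0"
  shows "\<forall>j. coeff ([:1, 1:] * q) j \<ge> 0"
proof
  fix j
  show "coeff ([:1, 1:] * q) j \<ge> 0"
    using assms by (cases j) (simp_all add: add_nonneg_nonneg)
qed

lemma num_monomials_one_plus_X_mult:
  fixes q :: "'a::linordered_semidom poly"
  assumes nonneg: "\<forall>j. coeff q j \<ge> 0" and "q \<noteq> 0"
  shows "num_monomials q + 1 \<le> num_monomials ([:1, 1:] * q)"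
proof -
  let ?S = "{i. coeff q i \<noteq> 0}"
  let ?T = "{i. coeff ([:1, 1:] * q) i \<noteq> 0}"
  have "coeff ([:1, 1:] * q) (Suc (degree q)) = lead_coeff q"
    by (simp add: coeff_eq_0)
  then have top: "Suc (degree q) \<in> ?T"
    using \<open>q \<noteq> 0\<close> by simp
  have "?S \<subseteq> ?T"
  proof
    fix i assume "i \<in> ?S"
    then show "i \<in> ?T"
      using nonneg by (cases i) (auto simp: add_nonneg_eq_0_iff)
  qed
  then have "card (insert (Suc (degree q)) ?S) \<le> card ?T"
    using top by (intro card_mono[OF finite_coeff_support]) blast
  moreover have "Suc (degree q) \<notin> ?S"
    by (simp add: coeff_eq_0)
  ultimately show ?thesis
    unfolding num_monomials_def using finite_coeff_support[of q] by simp
qed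

lemma num_monomials_one_plus_X_power_mult:
  fixes q :: "'a::linordered_semidom poly"
  assumes "\<forall>j. coeff q j \<ge> 0" and "q \<noteq> 0"
  shows "num_monomials q + m \<le> num_monomials ([:1, 1:] ^ m * q)"
  using assms
proof (induction m arbitrary: q)
  case 0
  then show ?case by simp
next
  case (Suc m)
  have "[:1, 1:] * q \<noteq> 0"
    using Suc.prems(2) no_zero_divisors[of "[:1, 1:]" q] by simp
  then have "num_monomials ([:1, 1:] * q) + m \<le> num_monomials ([:1, 1:] ^ m * ([:1, 1:] * q))"
    using Suc.IH coeff_one_plus_X_mult_nonneg[OF Suc.prems(1)] by blast
  moreover have "num_monomials q + 1 \<le> num_monomials ([:1, 1:] * q)"
    using num_monomials_one_plus_X_mult Suc.prems by blast
  moreover have "[:1, 1:] ^ Suc m * q = [:1, 1:] ^ m * ([:1, 1:] * q)"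
    by (simp only: power_Suc2 mult.assoc)
  ultimately show ?case
    by simp
qed

lemma card_pos_coeffs_lt_num_monomials:
  fixes p :: "'a::linordered_semidom poly"
  assumes "coeff p 0 \<noteq> 0"
  shows "card {j. j \<ge> 1 \<and> coeff p j > 0} + 1 \<le> num_monomials p"
proof -
  let ?P = "{j. j \<ge> 1 \<and> coeff p j > 0}"
  have "card (insert 0 ?P) \<le> num_monomials p"
    unfolding num_monomials_def using assms
    by (intro card_mono[OF finite_coeff_support]) auto
  moreover have "finite ?P"
    by (rule finite_subset[OF _ finite_coeff_support[of p]]) auto
  ultimately show ?thesis
    by simp
qed

theorem proposition2p4:
  fixes p :: "real poly" and k m :: nat
  assumes "coeff p 0 = 1"
    and "\<forall>j. coeff p j \<ge> 0"
    and "card {j. j \<ge> 1 \<and> coeff p j > 0} \<ge> k"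
  shows "num_monomials ([:1, 1:] ^ m * p) \<ge> m + 1 + k"
proof -
  have "p \<noteq> 0"
    using assms(1) by auto
  have "k + 1 \<le> num_monomials p"
    using card_pos_coeffs_lt_num_monomials[of p] assms(1,3) by simp
  moreover have "num_monomials p + m \<le> num_monomials ([:1, 1:] ^ m * p)"
    using num_monomials_one_plus_X_power_mult[OF assms(2) \<open>p \<noteq> 0\<close>] .
  ultimately show ?thesis
    by simp
qed

end
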